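(* Let $u$ be a finite game with player set $\mathcal V$ and strategy profile space $\mathcal X$, and let $x^*\in\mathcal X$ be a Nash equilibrium of $u$. Then the margin of robustness of $x^*$ is $$\mu_u(x^* )=\tfrac12\min_{i\in\mathcal V}\chi^u_i(x^* ).$$
   Context: A finite game consists of a finite nonempty player set $\mathcal V$, a finite nonempty action set $\mathcal A_i$ for each $i\in\mathcal V$, the strategy profile space $\mathcal X=\prod_{i\in\mathcal V}\mathcal A_i$, and utilities $u_i:\mathcal X\to\mathbb R$; the game is identified with $u=(u_i)_{i\in\mathcal V}$, and $\mathcal U\cong\mathbb R^{\mathcal V\times\mathcal X}$ is the space of all such games. Norms: $\|u_i\|_\infty=\max_{x\in\mathcal X}|u_i(x)|$, $\|u\|_\infty=\max_{i\in\mathcal V}\|u_i\|_\infty$. Profiles $x,y$ are $i$-comparable, $x\sim_i y$, if they coincide except possibly in entry $i$. Define $\chi^u_i(x)=\min_{y\sim_i x,\,y\neq x}\{u_i(x)-u_i(y)\}$. A (pure strategy) Nash equilibrium is a profile $x^*$ with $\chi^u_i(x^* )\ge0$ for all $i$. The margin of robustness $\mu_u(x^* )$ of a Nash equilibrium $x^*$ of $u$ is the infimum of $\|\delta\|_\infty$ over all perturbations $\delta\in\mathcal U$ such that $x^*$ is not a Nash equilibrium of the perturbed game $u+\delta$. *)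

theory Defs
  imports "HOL-Library.FuncSet" "HOL-Library.Extended_Real"
begin

text \<open>A finite game: players V :: 'p set, action sets A i, profiles = PiE V A,
  utilities u :: 'p => ('p => 'a) => real (only values on V x profiles matter).\<close>

definition profiles :: "'p set \<Rightarrow> ('p \<Rightarrow> 'a set) \<Rightarrow> ('p \<Rightarrow> 'a) set" where
  "profiles V A = PiE V A"

definition comparable :: "'p \<Rightarrow> ('p \<Rightarrow> 'a) \<Rightarrow> ('p \<Rightarrow> 'a) \<Rightarrow> bool" where
  "comparable i x y \<longleftrightarrow> (\<forall>j. j \<noteq> i \<longrightarrow> x j = y j)"

text \<open>chi; the minimum over an empty set is +infinity (extended reals).\<close>
definition chi :: "'p set \<Rightarrow> ('p \<Rightarrow> 'a set) \<Rightarrow> ('p \<Rightarrow> ('p \<Rightarrow> 'a) \<Rightarrow> real)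
                   \<Rightarrow> 'p \<Rightarrow> ('p \<Rightarrow> 'a) \<Rightarrow> ereal" where
  "chi V A u i x = (INF y \<in> {y \<in> profiles V A. comparable i y x \<and> y \<noteq> x}. ereal (u i x - u i y))"

definition is_NE :: "'p set \<Rightarrow> ('p \<Rightarrow> 'a set) \<Rightarrow> ('p \<Rightarrow> ('p \<Rightarrow> 'a) \<Rightarrow> real)
                   \<Rightarrow> ('p \<Rightarrow> 'a) \<Rightarrow> bool" where
  "is_NE V A u x \<longleftrightarrow> x \<in> profiles V A \<and> (\<forall>i\<in>V. chi V A u i x \<ge> 0)"

definition game_norm :: "'p set \<Rightarrow> ('p \<Rightarrow> 'a set) \<Rightarrow> ('p \<Rightarrow> ('p \<Rightarrow> 'a) \<Rightarrow> real) \<Rightarrow> real" where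
  "game_norm V A d = Max {\<bar>d i x\<bar> | i x. i \<in> V \<and> x \<in> profiles V A}"

definition margin :: "'p set \<Rightarrow> ('p \<Rightarrow> 'a set) \<Rightarrow> ('p \<Rightarrow> ('p \<Rightarrow> 'a) \<Rightarrow> real)
                   \<Rightarrow> ('p \<Rightarrow> 'a) \<Rightarrow> ereal" where
  "margin V A u x = (INF d \<in> {d. \<not> is_NE V A (\<lambda>i y. u i y + d i y) x}. ereal (game_norm V A d))"

end

theory Submission
  imports Defs
begin

text \<open>If a perturbation \<open>\<delta>\<close> destroys the equilibrium, some player \<open>i\<close> strictly prefers a
  deviation \<open>y\<close> in \<open>u + \<delta>\<close>, so \<open>u\<^sub>i(x) - u\<^sub>i(y) < \<delta>\<^sub>i(y) - \<delta>\<^sub>i(x) \<le> 2\<parallel>\<delta>\<parallel>\<close>; hence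
  \<open>min\<^sub>i \<chi>\<^sub>i(x) < 2\<parallel>\<delta>\<parallel>\<close>. Conversely, for a deviation \<open>y\<close> of player \<open>i\<close> with gap
  \<open>g = u\<^sub>i(x) - u\<^sub>i(y)\<close>, lowering \<open>u\<^sub>i(x)\<close> and raising \<open>u\<^sub>i(y)\<close> by \<open>g/2 + \<epsilon>\<close> makes \<open>y\<close> profitable
  with a perturbation of norm \<open>g/2 + \<epsilon>\<close>.\<close>

definition deviations :: "'p set \<Rightarrow> ('p \<Rightarrow> 'a set) \<Rightarrow> 'p \<Rightarrow> ('p \<Rightarrow> 'a) \<Rightarrow> ('p \<Rightarrow> 'a) set" where
  "deviations V A i x = {y \<in> profiles V A. comparable i y x \<and> y \<noteq> x}"

lemma chi_eq_INF_deviations: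
  "chi V A u i x = (INF y\<in>deviations V A i x. ereal (u i x - u i y))"
  by (simp add: chi_def deviations_def)

lemma chi_le_gap: "y \<in> deviations V A i x \<Longrightarrow> chi V A u i x \<le> ereal (u i x - u i y)"
  unfolding chi_eq_INF_deviations by (rule INF_lower)

lemma chi_nonneg_iff: "0 \<le> chi V A u i x \<longleftrightarrow> (\<forall>y\<in>deviations V A i x. u i y \<le> u i x)"
  by (simp add: chi_eq_INF_deviations le_INF_iff)

lemma is_NE_iff_no_profitable_deviation:
  "is_NE V A u x \<longleftrightarrow> x \<in> profiles V A \<and> (\<forall>i\<in>V. \<forall>y\<in>deviations V A i x. u i y \<le> u i x)"
  by (simp add: is_NE_def chi_nonneg_iff)

lemma finite_profiles: "finite V \<Longrightarrow> \<forall>i\<in>V. finite (A i) \<Longrightarrow> finite (profiles V A)"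
  by (simp add: profiles_def finite_PiE)

lemma game_norm_eq_Max_image:
  "game_norm V A d = Max ((\<lambda>(i, z). \<bar>d i z\<bar>) ` (V \<times> profiles V A))"
  unfolding game_norm_def by (rule arg_cong[where f = Max]) auto

lemma abs_le_game_norm:
  assumes "finite V" "\<forall>i\<in>V. finite (A i)" "i \<in> V" "z \<in> profiles V A"
  shows "\<bar>d i z\<bar> \<le> game_norm V A d"
  unfolding game_norm_eq_Max_image using assms finite_profiles[OF assms(1,2)] by (intro Max_ge) auto

lemma game_norm_le:
  assumes "finite V" "\<forall>i\<in>V. finite (A i)" "V \<noteq> {}" "profiles V A \<noteq> {}"
    and "\<And>i z. i \<in> V \<Longrightarrow> z \<in> profiles V A \<Longrightarrow> \<bar>d i z\<bar> \<le> c"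
  shows "game_norm V A d \<le> c"
  unfolding game_norm_eq_Max_image using assms finite_profiles[OF assms(1,2)] by (intro Max.boundedI) auto

lemma gap_less_twice_norm_if_not_NE:
  assumes "finite V" "\<forall>i\<in>V. finite (A i)" "x \<in> profiles V A"
    and "\<not> is_NE V A (\<lambda>i z. u i z + d i z) x"
  obtains i y where "i \<in> V" "y \<in> deviations V A i x" "u i x - u i y < 2 * game_norm V A d"
proof -
  from assms(3,4) obtain i y where i: "i \<in> V" and y: "y \<in> deviations V A i x"
    and profitable: "u i x + d i x < u i y + d i y"
    by (auto simp: is_NE_iff_no_profitable_deviation not_le)
  have "y \<in> profiles V A" using y by (simp add: deviations_def)
  then have "\<bar>d i x\<bar> \<le> game_norm V A d" "\<bar>d i y\<bar> \<le> game_norm V A d"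
    using abs_le_game_norm[OF assms(1,2) i] assms(3) by auto
  with profitable have "u i x - u i y < 2 * game_norm V A d" by linarith
  with i y show thesis by (rule that)
qed

lemma margin_le_half_gap:
  assumes "finite V" "\<forall>i\<in>V. finite (A i)" "i \<in> V" "y \<in> deviations V A i x"
    and gap_nonneg: "u i y \<le> u i x"
  shows "margin V A u x \<le> ereal ((u i x - u i y) / 2)"
proof (rule ereal_le_epsilon2)
  fix e :: real
  assume "0 < e"
  define c where "c = (u i x - u i y) / 2 + e"
  define d where "d = (\<lambda>j z. if j = i \<and> z = x then - c else if j = i \<and> z = y then c else 0)"
  have y: "y \<in> profiles V A" "y \<noteq> x" using assms(4) by (auto simp: deviations_def)
  have "u i x + d i x < u i y + d i y"
    using y \<open>0 < e\<close> by (simp add: d_def c_def field_simps)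
  then have not_NE: "\<not> is_NE V A (\<lambda>j z. u j z + d j z) x"
    unfolding is_NE_iff_no_profitable_deviation using assms(3,4) not_le by blast
  have "0 < c" using gap_nonneg \<open>0 < e\<close> by (simp add: c_def add_nonneg_pos)
  then have "game_norm V A d \<le> c"
    using assms(1-3) y by (intro game_norm_le) (auto simp: d_def)
  then have "margin V A u x \<le> ereal c"
    unfolding margin_def using not_NE by (auto intro: INF_lower2)
  then show "margin V A u x \<le> ereal ((u i x - u i y) / 2) + ereal e"
    by (simp add: c_def)
qed

lemma twice_margin_le_chi:
  assumes "finite V" "\<forall>i\<in>V. finite (A i)" "is_NE V A u x" "i \<in> V"
  shows "2 * margin V A u x \<le> chi V A u i x"
  unfolding chi_eq_INF_deviations
proof (rule INF_greatest)
  fix y assume y: "y \<in> deviations V A i x"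
  then have "u i y \<le> u i x" using assms(3,4) by (simp add: is_NE_iff_no_profitable_deviation)
  then show "2 * margin V A u x \<le> ereal (u i x - u i y)"
    using margin_le_half_gap[OF assms(1,2,4) y] by (simp add: ereal_le_divide_pos[symmetric])
qed

lemma INF_chi_le_twice_game_norm_if_not_NE:
  assumes "finite V" "\<forall>i\<in>V. finite (A i)" "x \<in> profiles V A"
    and "\<not> is_NE V A (\<lambda>i z. u i z + d i z) x"
  shows "(INF i\<in>V. chi V A u i x) \<le> ereal (2 * game_norm V A d)"
proof -
  obtain i y where i: "i \<in> V" and y: "y \<in> deviations V A i x"
    and gap: "u i x - u i y < 2 * game_norm V A d"
    using gap_less_twice_norm_if_not_NE[OF assms] .
  have "(INF i\<in>V. chi V A u i x) \<le> chi V A u i x" using i by (rule INF_lower)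
  also have "\<dots> \<le> ereal (u i x - u i y)" using y by (rule chi_le_gap)
  also have "\<dots> \<le> ereal (2 * game_norm V A d)" using gap by simp
  finally show ?thesis .
qed

theorem proposition1:
  fixes V :: "'p set" and A :: "'p \<Rightarrow> 'a set"
    and u :: "'p \<Rightarrow> ('p \<Rightarrow> 'a) \<Rightarrow> real" and x :: "'p \<Rightarrow> 'a"
  assumes "finite V" and "V \<noteq> {}"
    and "\<forall>i\<in>V. finite (A i) \<and> A i \<noteq> {}"
    and "is_NE V A u x"
  shows "margin V A u x = (INF i\<in>V. chi V A u i x) / 2"
proof (rule antisym)
  have fin: "\<forall>i\<in>V. finite (A i)" using assms(3) by simp
  have x: "x \<in> profiles V A" using assms(4) by (simp add: is_NE_def)
  have "2 * margin V A u x \<le> (INF i\<in>V. chi V A u i x)"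
    using twice_margin_le_chi[OF assms(1) fin assms(4)] by (rule INF_greatest)
  then show "margin V A u x \<le> (INF i\<in>V. chi V A u i x) / 2"
    by (simp add: ereal_le_divide_pos)
  have "(INF i\<in>V. chi V A u i x) / 2 \<le> ereal (game_norm V A d)"
    if "\<not> is_NE V A (\<lambda>i z. u i z + d i z) x" for d
    using INF_chi_le_twice_game_norm_if_not_NE[OF assms(1) fin x that]
    by (simp add: ereal_divide_le_pos)
  then show "(INF i\<in>V. chi V A u i x) / 2 \<le> margin V A u x"
    unfolding margin_def by (auto intro: INF_greatest)
qed

end
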